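(* Let $L$ be a finite set of axis-aligned line segments in the plane, let $\mathcal{C}$ be the collection of associated subsets of the rectangular cells of the arrangement of $L$, let $k\ge 0$ be an integer, and let $\mathcal{C}_1$ be obtained from $\mathcal{C}$ as follows: for every pair of segments $\ell,\ell'$ that are both contained in more than $2k$ subsets of $\mathcal{C}$, add the subset $\{\ell,\ell'\}$ and remove all subsets containing both $\ell$ and $\ell'$. Then a set $L' \subset L$ with $|L'| \le k$ is a minimum-size cover of $\mathcal{C}_1$ if and only if it is a minimum-size cover of $\mathcal{C}$.
   Context: A cell of the arrangement of $L$ is a maximal connected region of the plane not intersected by any segment of $L$. A cell is rectangular if its boundary is formed by exactly four segments of $L$; its associated subset is the set of these four bounding segments. A set $L'\subseteq L$ is a cover of a collection $\mathcal{D}$ of subsets of $L$ if every member of $\mathcal{D}$ contains at least one element of $L'$ (i.e., $L'$ is a hitting set for $\mathcal{D}$). *)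

theory Defs
  imports "HOL-Analysis.Analysis"
begin

type_synonym point = "real \<times> real"

definition axis_segment :: "point set \<Rightarrow> bool" where
  "axis_segment s \<longleftrightarrow>
     (\<exists>a b. a \<noteq> b \<and> (fst a = fst b \<or> snd a = snd b) \<and> s = closed_segment a b)"

definition cells :: "point set set \<Rightarrow> point set set" where
  "cells L = components (- \<Union>L)"

text \<open>Segments forming (part of) the boundary of a cell: those sharing
  more than finitely many points (a piece of positive length) with its boundary.\<close>
definition bounding_segs :: "point set set \<Rightarrow> point set \<Rightarrow> point set set" where
  "bounding_segs L c = {s \<in> L. infinite (s \<inter> frontier c)}"

definition rectangular_cell :: "point set set \<Rightarrow> point set \<Rightarrow> bool" where
  "rectangular_cell L c \<longleftrightarrow>
     c \<in> cells L \<and> bounded c \<and> frontier c \<subseteq> \<Union>(bounding_segs L c)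
     \<and> card (bounding_segs L c) = 4"

definition cell_subsets :: "point set set \<Rightarrow> point set set set" where
  "cell_subsets L = bounding_segs L ` {c. rectangular_cell L c}"

definition is_cover :: "'a set set \<Rightarrow> 'a set \<Rightarrow> bool" where
  "is_cover D L' \<longleftrightarrow> (\<forall>S\<in>D. S \<inter> L' \<noteq> {})"

definition min_cover :: "'a set \<Rightarrow> 'a set set \<Rightarrow> 'a set \<Rightarrow> bool" where
  "min_cover L D L' \<longleftrightarrow> L' \<subseteq> L \<and> is_cover D L' \<and>
     (\<forall>M. M \<subseteq> L \<longrightarrow> is_cover D M \<longrightarrow> card L' \<le> card M)"

definition heavy_pair :: "'a set set \<Rightarrow> nat \<Rightarrow> 'a \<Rightarrow> 'a \<Rightarrow> bool" where
  "heavy_pair C k l l' \<longleftrightarrow> l \<noteq> l' \<and> card {S \<in> C. l \<in> S \<and> l' \<in> S} > 2 * k"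

definition reduce_C1 :: "'a set set \<Rightarrow> nat \<Rightarrow> 'a set set" where
  "reduce_C1 C k =
     {S \<in> C. \<not> (\<exists>l l'. heavy_pair C k l l' \<and> l \<in> S \<and> l' \<in> S)}
     \<union> {{l, l'} | l l'. heavy_pair C k l l'}"

end

(*
  Every rectangular cell is an open box whose four bounding segments are its two vertical and
  its two horizontal sides. Three distinct segments bounding a common cell therefore consist of
  two parallel sides, which fix the extent of the box in one direction, and one orthogonal side,
  which fixes one end of it in the other direction; of any three such boxes, two end on the same
  side of that segment, hence overlap, hence coincide as components. So every triple of segments
  lies in at most two sets of C. A cover M of C with |M| <= k then hits every heavy pair
  {l, l'}: otherwise each of the more than 2k sets containing l and l' contains an element of M,
  and each element of M lies in at most two of them. Consequently C and C1 have the same covers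
  of size at most k, and in particular the same minimum covers of such size.
*)
theory Submission
  imports Defs
begin

definition at_most_two_per_triple :: "'a set set \<Rightarrow> bool" where
  "at_most_two_per_triple C \<longleftrightarrow> (\<forall>l l' m. l \<noteq> l' \<and> l \<noteq> m \<and> l' \<noteq> m \<longrightarrow>
     finite {S \<in> C. {l, l', m} \<subseteq> S} \<and> card {S \<in> C. {l, l', m} \<subseteq> S} \<le> 2)"

lemma is_cover_if_is_cover_reduce_C1:
  assumes "is_cover (reduce_C1 C k) M"
  shows "is_cover C M"
  unfolding is_cover_def
proof
  fix S assume S: "S \<in> C"
  show "S \<inter> M \<noteq> {}"
  proof (cases "\<exists>l l'. heavy_pair C k l l' \<and> l \<in> S \<and> l' \<in> S")
    case True
    then obtain l l' where "heavy_pair C k l l'" "l \<in> S" "l' \<in> S"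
      by blast
    moreover from this(1) have "{l, l'} \<in> reduce_C1 C k"
      by (auto simp: reduce_C1_def)
    ultimately show ?thesis
      using assms by (auto simp: is_cover_def)
  next
    case False
    then have "S \<in> reduce_C1 C k"
      using S by (simp add: reduce_C1_def)
    then show ?thesis
      using assms by (simp add: is_cover_def)
  qed
qed

lemma small_cover_hits_heavy_pair:
  assumes sparse: "at_most_two_per_triple C" and "finite M" and cov: "is_cover C M"
    and "card M \<le> k" and heavy: "heavy_pair C k l l'"
  shows "l \<in> M \<or> l' \<in> M"
proof (rule ccontr)
  assume not_hit: "\<not> (l \<in> M \<or> l' \<in> M)"
  let ?P = "{S \<in> C. l \<in> S \<and> l' \<in> S}"
  let ?A = "\<lambda>m. {S \<in> C. {l, l', m} \<subseteq> S}"
  have "l \<noteq> l'" and big: "2 * k < card ?P"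
    using heavy by (auto simp: heavy_pair_def)
  have A: "finite (?A m) \<and> card (?A m) \<le> 2" if "m \<in> M" for m
  proof -
    have "l \<noteq> m" "l' \<noteq> m"
      using not_hit that by auto
    then show ?thesis
      using sparse \<open>l \<noteq> l'\<close> unfolding at_most_two_per_triple_def by blast
  qed
  have "?P \<subseteq> (\<Union>m\<in>M. ?A m)"
  proof
    fix S assume S: "S \<in> ?P"
    then obtain m where "m \<in> S" "m \<in> M"
      using cov by (auto simp: is_cover_def)
    then show "S \<in> (\<Union>m\<in>M. ?A m)"
      using S by blast
  qed
  moreover have "finite (\<Union>m\<in>M. ?A m)"
    using A \<open>finite M\<close> by blast
  ultimately have "card ?P \<le> card (\<Union>m\<in>M. ?A m)"
    by (rule card_mono[rotated])
  also have "\<dots> \<le> (\<Sum>m\<in>M. card (?A m))"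
    by (rule card_UN_le[OF \<open>finite M\<close>])
  also have "\<dots> \<le> 2 * card M"
    using sum_mono[of M "\<lambda>m. card (?A m)" "\<lambda>_. 2"] A by simp
  also have "\<dots> \<le> 2 * k"
    using \<open>card M \<le> k\<close> by simp
  finally show False
    using big by simp
qed

lemma is_cover_reduce_C1_if_is_cover:
  assumes "at_most_two_per_triple C" "finite M" "is_cover C M" "card M \<le> k"
  shows "is_cover (reduce_C1 C k) M"
  unfolding is_cover_def
proof
  fix S assume "S \<in> reduce_C1 C k"
  then consider "S \<in> C" | l l' where "heavy_pair C k l l'" "S = {l, l'}"
    by (auto simp: reduce_C1_def)
  then show "S \<inter> M \<noteq> {}"
  proof cases
    case 1
    then show ?thesis
      using assms(3) by (simp add: is_cover_def)
  next
    case 2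
    then show ?thesis
      using small_cover_hits_heavy_pair[OF assms] by auto
  qed
qed

lemma min_cover_cong_small_covers:
  assumes "L' \<subseteq> L"
    and "\<And>M. M \<subseteq> L \<Longrightarrow> card M \<le> card L' \<Longrightarrow> is_cover D M \<longleftrightarrow> is_cover D' M"
  shows "min_cover L D L' \<longleftrightarrow> min_cover L D' L'"
  using assms unfolding min_cover_def by (meson nat_le_linear order_refl)

lemma min_cover_reduce_C1_iff:
  assumes sparse: "at_most_two_per_triple C" and "finite L" "L' \<subseteq> L" "card L' \<le> k"
  shows "min_cover L (reduce_C1 C k) L' \<longleftrightarrow> min_cover L C L'"
proof (rule min_cover_cong_small_covers[OF \<open>L' \<subseteq> L\<close>])
  fix M assume "M \<subseteq> L" "card M \<le> card L'"
  then have "finite M" "card M \<le> k"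
    using \<open>finite L\<close> \<open>card L' \<le> k\<close> finite_subset by auto
  then show "is_cover (reduce_C1 C k) M \<longleftrightarrow> is_cover C M"
    using is_cover_if_is_cover_reduce_C1 is_cover_reduce_C1_if_is_cover[OF sparse] by blast
qed

lemma eq_lower_bound_if_sum_le:
  fixes f :: "'a \<Rightarrow> nat"
  assumes "finite A" "\<And>x. x \<in> A \<Longrightarrow> n \<le> f x" "sum f A \<le> n * card A" "x \<in> A"
  shows "f x = n"
proof -
  have "(\<Sum>x\<in>A. n) = sum f A"
    using sum_mono[of A "\<lambda>_. n" f] assms(2,3) by (simp add: mult.commute)
  then show ?thesis
    using sum_mono_inv[OF _ assms(2) assms(4,1)] by simp
qed

lemma exists_point_off_grid:
  fixes W :: "'a::euclidean_space set"
  assumes "open W" "w \<in> W" "\<And>i. i \<in> Basis \<Longrightarrow> finite (X i)"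
  shows "\<exists>q\<in>W. \<forall>i\<in>Basis. q \<bullet> i \<notin> X i"
proof -
  obtain e where e: "e > 0" "ball w e \<subseteq> W"
    using assms open_contains_ball by blast
  define F where "F = (\<Union>i\<in>Basis. (\<lambda>u. u - w \<bullet> i) ` X i)"
  have "finite F"
    using assms(3) by (simp add: F_def)
  moreover have "infinite {0<..<e / norm (One :: 'a)}"
    using e by simp
  ultimately obtain t where t: "t \<in> {0<..<e / norm (One :: 'a)}" "t \<notin> F"
    using Diff_infinite_finite infinite_imp_nonempty by blast
  define q where "q = w + t *\<^sub>R One"
  have "dist w q = t * norm (One :: 'a)"
    using t(1) by (simp add: q_def dist_norm)
  also have "\<dots> < e"
    using t(1) by (simp add: pos_less_divide_eq)
  finally have "q \<in> W"
    using e by auto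
  moreover have "q \<bullet> i \<notin> X i" if "i \<in> Basis" for i
  proof
    assume "q \<bullet> i \<in> X i"
    moreover have "q \<bullet> i - w \<bullet> i = t"
      using that by (simp add: q_def inner_add_left)
    ultimately show False
      using t(2) that unfolding F_def by blast
  qed
  ultimately show ?thesis
    by blast
qed

lemma not_bounded_ray:
  fixes p d :: "'a::real_normed_vector"
  assumes "d \<noteq> 0"
  shows "\<not> bounded ((\<lambda>t. p + t *\<^sub>R d) ` {0..})"
proof
  assume "bounded ((\<lambda>t. p + t *\<^sub>R d) ` {0..})"
  then obtain a where a: "\<And>t. t \<ge> 0 \<Longrightarrow> norm (p + t *\<^sub>R d) \<le> a"
    by (auto simp: bounded_iff)
  define t where "t = (\<bar>a\<bar> + norm p + 1) / norm d"
  have "t \<ge> 0" and "norm (t *\<^sub>R d) = \<bar>a\<bar> + norm p + 1"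
    using assms by (auto simp: t_def)
  moreover have "norm (t *\<^sub>R d) \<le> norm (p + t *\<^sub>R d) + norm p"
    by (metis add_diff_cancel_left' norm_triangle_ineq4 add.commute)
  ultimately show False
    using a[of t] by linarith
qed

text \<open>A grid is given by finite sets \<open>X i\<close> of offsets: it consists of the hyperplanes
  \<open>{q. q \<bullet> i = u}\<close> with \<open>i \<in> Basis\<close> and \<open>u \<in> X i\<close>. For \<open>p\<close> off the grid,
  \<open>grid_cell X p\<close> is the open cell of the grid containing \<open>p\<close>.\<close>

definition grid_cell :: "('a::euclidean_space \<Rightarrow> real set) \<Rightarrow> 'a \<Rightarrow> 'a set" where
  "grid_cell X p = {q. \<forall>i\<in>Basis. \<forall>u\<in>X i. (u < p \<bullet> i \<longrightarrow> u < q \<bullet> i) \<and> (p \<bullet> i < u \<longrightarrow> q \<bullet> i < u)}"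

lemma convex_grid_cell: "convex (grid_cell X p)"
proof -
  have "a < u * x + v * y" if "a < x" "a < y" "0 \<le> u" "0 \<le> v" "u + v = 1" for a x y u v :: real
    using convex_bound_lt[of "-x" "-a" "-y" u v] that by simp
  then show ?thesis
    unfolding convex_def grid_cell_def by (auto simp: inner_add_left intro!: convex_bound_lt)
qed

lemma grid_cell_subset:
  fixes c :: "'a::euclidean_space set"
  assumes "connected c" "frontier c \<subseteq> {q. \<exists>i\<in>Basis. q \<bullet> i \<in> X i}"
    and "p \<in> c" "\<forall>i\<in>Basis. p \<bullet> i \<notin> X i"
  shows "grid_cell X p \<subseteq> c"
proof (rule ccontr)
  assume "\<not> grid_cell X p \<subseteq> c"
  moreover have "p \<in> grid_cell X p"
    by (simp add: grid_cell_def)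
  ultimately obtain q where q: "q \<in> grid_cell X p" "q \<in> frontier c"
    using connected_Int_frontier[OF convex_connected[OF convex_grid_cell]] assms(3) by blast
  then obtain i where i: "i \<in> Basis" "q \<bullet> i \<in> X i"
    using assms(2) by blast
  then have "\<not> q \<bullet> i < p \<bullet> i" "\<not> p \<bullet> i < q \<bullet> i"
    using q(1) unfolding grid_cell_def by auto
  then show False
    using i assms(4) by force
qed

text \<open>The sign condition says that the ray from \<open>p\<close> in direction \<open>\<sigma> *\<^sub>R i\<close> crosses no
  grid hyperplane orthogonal to \<open>i\<close>.\<close>

lemma ray_in_grid_cell:
  fixes p i :: "'a::euclidean_space"
  assumes "i \<in> Basis" "\<And>u. u \<in> X i \<Longrightarrow> \<sigma> * (u - p \<bullet> i) \<le> 0" "t \<ge> 0"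
  shows "p + t *\<^sub>R (\<sigma> *\<^sub>R i) \<in> grid_cell X p"
  unfolding grid_cell_def
proof (intro CollectI ballI)
  fix j u assume j: "j \<in> Basis" and u: "u \<in> X j"
  show "(u < p \<bullet> j \<longrightarrow> u < (p + t *\<^sub>R (\<sigma> *\<^sub>R i)) \<bullet> j) \<and>
        (p \<bullet> j < u \<longrightarrow> (p + t *\<^sub>R (\<sigma> *\<^sub>R i)) \<bullet> j < u)"
  proof (cases "j = i")
    case True
    have step: "(u < x \<longrightarrow> u < x + t * \<sigma>) \<and> (x < u \<longrightarrow> x + t * \<sigma> < u)"
      if "\<sigma> * (u - x) \<le> 0" for x
      using that assms(3) by (auto simp: mult_le_0_iff)
        (smt (verit) mult_nonneg_nonneg mult_nonneg_nonpos)+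
    have "(p + t *\<^sub>R (\<sigma> *\<^sub>R i)) \<bullet> j = p \<bullet> i + t * \<sigma>"
      using True assms(1) by (simp add: inner_add_left)
    then show ?thesis
      using step assms(2) u True by simp
  next
    case False
    then show ?thesis
      using assms(1) j by (simp add: inner_add_left inner_Basis)
  qed
qed

lemma grid_values_around:
  fixes c :: "'a::euclidean_space set"
  assumes "connected c" "bounded c" "frontier c \<subseteq> {q. \<exists>i\<in>Basis. q \<bullet> i \<in> X i}"
    and "p \<in> c" "\<forall>i\<in>Basis. p \<bullet> i \<notin> X i" "i \<in> Basis"
  shows "\<exists>u\<in>X i. u < p \<bullet> i" "\<exists>u\<in>X i. p \<bullet> i < u"
proof -
  have cell: "grid_cell X p \<subseteq> c"
    using grid_cell_subset assms(1,3-5) by blast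
  have escape: "\<exists>u\<in>X i. 0 < \<sigma> * (u - p \<bullet> i)" if "\<sigma> \<noteq> 0" for \<sigma>
  proof (rule ccontr)
    assume "\<not> ?thesis"
    then have "(\<lambda>t. p + t *\<^sub>R (\<sigma> *\<^sub>R i)) ` {0..} \<subseteq> grid_cell X p"
      using ray_in_grid_cell[OF assms(6)] by (force simp: not_less)
    then show False
      using not_bounded_ray[of "\<sigma> *\<^sub>R i" p] bounded_subset[OF assms(2)] cell assms(6) that
      by (metis nonzero_Basis scaleR_eq_0_iff subset_trans)
  qed
  show "\<exists>u\<in>X i. u < p \<bullet> i"
    using escape[of "-1"] by simp
  show "\<exists>u\<in>X i. p \<bullet> i < u"
    using escape[of 1] by simp
qed

lemma grid_cell_eq_box:
  fixes a b p :: "'a::euclidean_space"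
  assumes "\<And>i. i \<in> Basis \<Longrightarrow> X i = {a \<bullet> i, b \<bullet> i}" "p \<in> box a b"
  shows "grid_cell X p = box a b"
  using assms by (auto simp: grid_cell_def mem_box)

lemma card_grid_values_eq_2:
  fixes c :: "'a::euclidean_space set"
  assumes "open c" "connected c" "bounded c" "c \<noteq> {}"
    and fin: "\<And>i. i \<in> Basis \<Longrightarrow> finite (X i)"
    and front: "frontier c \<subseteq> {q. \<exists>i\<in>Basis. q \<bullet> i \<in> X i}"
    and few: "(\<Sum>i\<in>Basis. card (X i)) \<le> 2 * DIM('a)"
    and "i \<in> Basis"
  shows "card (X i) = 2"
proof -
  obtain w where "w \<in> c"
    using assms(4) by blast
  then obtain p where p: "p \<in> c" "\<forall>i\<in>Basis. p \<bullet> i \<notin> X i"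
    using exists_point_off_grid[of c w X] assms(1) fin by blast
  have two: "2 \<le> card (X i)" if i: "i \<in> Basis" for i
  proof -
    obtain u v where "u \<in> X i" "v \<in> X i" "u < v"
      using grid_values_around[OF assms(2,3) front p i] by (meson order.strict_trans)
    then show ?thesis
      using card_mono[OF fin[OF i], of "{u, v}"] by simp
  qed
  then show ?thesis
    using eq_lower_bound_if_sum_le[OF finite_Basis two _ \<open>i \<in> Basis\<close>] few by (simp add: mult.commute)
qed

lemma bounded_grid_component_eq_box:
  fixes c :: "'a::euclidean_space set"
  assumes "open c" "connected c" "bounded c" "c \<noteq> {}"
    and fin: "\<And>i. i \<in> Basis \<Longrightarrow> finite (X i)"
    and front: "frontier c \<subseteq> {q. \<exists>i\<in>Basis. q \<bullet> i \<in> X i}"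
    and few: "(\<Sum>i\<in>Basis. card (X i)) \<le> 2 * DIM('a)"
  obtains a b where "c = box a b" "\<And>i. i \<in> Basis \<Longrightarrow> a \<bullet> i < b \<bullet> i \<and> X i = {a \<bullet> i, b \<bullet> i}"
proof -
  let ?off_grid = "\<lambda>q. q \<in> c \<and> (\<forall>i\<in>Basis. q \<bullet> i \<notin> X i)"
  have off_grid_in: "\<exists>q\<in>W. ?off_grid q" if W: "open W" "W \<subseteq> c" "w \<in> W" for W w
    using exists_point_off_grid[of W w X] W fin by blast
  have minmax: "X i = {Min (X i), Max (X i)} \<and> Min (X i) < Max (X i)" if "i \<in> Basis" for i
  proof -
    from card_grid_values_eq_2[OF assms that] obtain x y where "X i = {x, y}" "x \<noteq> y"
      by (auto simp: card_2_iff)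
    then show ?thesis
      by (auto simp: min_def max_def)
  qed
  define a :: 'a where "a = (\<Sum>i\<in>Basis. Min (X i) *\<^sub>R i)"
  define b :: 'a where "b = (\<Sum>i\<in>Basis. Max (X i) *\<^sub>R i)"
  have ab: "a \<bullet> i < b \<bullet> i \<and> X i = {a \<bullet> i, b \<bullet> i}" if "i \<in> Basis" for i
    using minmax[OF that] that by (simp add: a_def b_def inner_sum_left_Basis)
  have off_grid_box: "q \<in> box a b" if "?off_grid q" for q
    unfolding mem_box
  proof
    fix i :: 'a assume i: "i \<in> Basis"
    have "\<exists>u\<in>X i. u < q \<bullet> i" "\<exists>u\<in>X i. q \<bullet> i < u"
      using grid_values_around[OF assms(2,3) front _ _ i] that by blast+
    then show "a \<bullet> i < q \<bullet> i \<and> q \<bullet> i < b \<bullet> i"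
      using ab[OF i] by auto
  qed
  obtain p where p: "?off_grid p"
    using off_grid_in[OF assms(1) order.refl] assms(4) by blast
  have "box a b \<subseteq> c"
    using grid_cell_subset[OF assms(2) front] grid_cell_eq_box[OF _ off_grid_box[OF p]] ab p by blast
  moreover have "c \<subseteq> cbox a b"
  proof (rule ccontr)
    assume "\<not> c \<subseteq> cbox a b"
    then obtain r where "r \<in> c - cbox a b"
      by blast
    then obtain q where "?off_grid q" "q \<in> c - cbox a b"
      using off_grid_in[of "c - cbox a b"] assms(1) by blast
    then show False
      using off_grid_box box_subset_cbox by blast
  qed
  then have "c \<subseteq> box a b"
    using interior_maximal[OF _ assms(1)] interior_cbox by metis
  ultimately show ?thesis
    using that ab by blast
qed

definition level_in :: "'a::real_inner \<Rightarrow> 'a set \<Rightarrow> bool" where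
  "level_in i s \<longleftrightarrow> (\<exists>u. \<forall>q\<in>s. q \<bullet> i = u)"

definition level_of :: "'a::real_inner \<Rightarrow> 'a set \<Rightarrow> real" where
  "level_of i s = (SOME q. q \<in> s) \<bullet> i"

lemma level_of_eq: "level_in i s \<Longrightarrow> q \<in> s \<Longrightarrow> q \<bullet> i = level_of i s"
  unfolding level_in_def level_of_def by (metis someI)

lemma level_in_closed_segment:
  assumes "a \<bullet> i = b \<bullet> i"
  shows "level_in i (closed_segment a b)"
proof -
  have "closed_segment a b \<subseteq> {q. i \<bullet> q = a \<bullet> i}"
    using assms by (intro closed_segment_subset convex_hyperplane) (simp_all add: inner_commute)
  then show ?thesis
    unfolding level_in_def by (auto simp: inner_commute)
qed

lemma Basis_point_eq:
  assumes "i \<in> Basis" "j \<in> Basis" "i \<noteq> j"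
  shows "(Basis :: point set) = {i, j}"
  using assms by (auto simp: Basis_prod_def)

lemma axis_segment_level_in:
  assumes "axis_segment s"
  obtains i where "i \<in> Basis" "level_in i s"
proof -
  obtain a b where ab: "fst a = fst b \<or> snd a = snd b" "s = closed_segment a b"
    using assms unfolding axis_segment_def by blast
  have "(1, 0) \<in> (Basis :: point set)" "(0, 1) \<in> (Basis :: point set)"
    by (simp_all add: Basis_prod_def)
  moreover have "a \<bullet> (1, 0) = fst a" "a \<bullet> (0, 1) = snd a" for a :: point
    by (simp_all add: inner_prod_def)
  ultimately have "\<exists>i\<in>Basis. a \<bullet> i = b \<bullet> i"
    using ab(1) by (elim disjE) (simp_all add: bexI[of _ "(1, 0)"] bexI[of _ "(0, 1)"])
  then show ?thesis
    using that ab(2) level_in_closed_segment by blast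
qed

lemma axis_segment_level_in_unique:
  assumes "axis_segment s" "i \<in> Basis" "j \<in> Basis" "level_in i s" "level_in j s"
  shows "i = j"
proof (rule ccontr)
  assume "i \<noteq> j"
  obtain a b where ab: "a \<noteq> b" "s = closed_segment a b"
    using assms(1) unfolding axis_segment_def by blast
  have same: "a \<bullet> k = b \<bullet> k" if "k \<in> {i, j}" for k
  proof -
    have "level_in k s"
      using that assms(4,5) by blast
    moreover have "a \<in> s" "b \<in> s"
      using ab(2) by auto
    ultimately show ?thesis
      using level_of_eq by metis
  qed
  have "a = b"
    unfolding euclidean_eq_iff[of a b] Basis_point_eq[OF assms(2,3) \<open>i \<noteq> j\<close>] using same by simp
  then show False
    using ab(1) by blast
qed

definition sides :: "point set set \<Rightarrow> point set \<Rightarrow> point \<Rightarrow> point set set" where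
  "sides L c i = {s \<in> bounding_segs L c. level_in i s}"

lemma card_bounding_segs_eq_sum_sides:
  assumes fin: "finite L" and ax: "\<forall>s\<in>L. axis_segment s"
  shows "card (bounding_segs L c) = (\<Sum>i\<in>Basis. card (sides L c i))"
proof -
  have axis: "axis_segment s" if "s \<in> bounding_segs L c" for s
    using that ax by (simp add: bounding_segs_def)
  have "bounding_segs L c \<subseteq> (\<Union>i\<in>Basis. sides L c i)"
  proof
    fix s assume s: "s \<in> bounding_segs L c"
    obtain i where "i \<in> Basis" "level_in i s"
      using axis[OF s] by (rule axis_segment_level_in)
    then show "s \<in> (\<Union>i\<in>Basis. sides L c i)"
      using s by (auto simp: sides_def)
  qed
  then have "bounding_segs L c = (\<Union>i\<in>Basis. sides L c i)"
    by (auto simp: sides_def)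
  moreover have "finite (sides L c i)" for i
    using fin by (simp add: sides_def bounding_segs_def)
  moreover have "sides L c i \<inter> sides L c j = {}" if "i \<in> Basis" "j \<in> Basis" "i \<noteq> j" for i j
    using axis axis_segment_level_in_unique[OF _ that(1,2)] that(3) unfolding sides_def by blast
  ultimately show ?thesis
    by (simp add: card_UN_disjoint)
qed

lemma closed_Union_axis_segments:
  assumes "finite L" "\<forall>s\<in>L. axis_segment s"
  shows "closed (\<Union>L)"
  using assms by (intro closed_Union) (auto simp: axis_segment_def)

lemma frontier_subset_levels_of_sides:
  assumes ax: "\<forall>s\<in>L. axis_segment s" and fr: "frontier c \<subseteq> \<Union>(bounding_segs L c)"
  shows "frontier c \<subseteq> {q. \<exists>i\<in>Basis. q \<bullet> i \<in> level_of i ` sides L c i}"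
proof
  fix q assume "q \<in> frontier c"
  then obtain s where s: "s \<in> bounding_segs L c" "q \<in> s"
    using fr by blast
  moreover have "axis_segment s"
    using s ax by (auto simp: bounding_segs_def)
  then obtain i where "i \<in> Basis" "level_in i s"
    by (rule axis_segment_level_in)
  ultimately show "q \<in> {q. \<exists>i\<in>Basis. q \<bullet> i \<in> level_of i ` sides L c i}"
    using level_of_eq by (fastforce simp: sides_def)
qed

lemma rectangular_cell_eq_box:
  assumes fin: "finite L" and ax: "\<forall>s\<in>L. axis_segment s" and rc: "rectangular_cell L c"
  obtains a b where "c = box a b"
    "\<And>i. i \<in> Basis \<Longrightarrow> a \<bullet> i < b \<bullet> i \<and> level_of i ` sides L c i = {a \<bullet> i, b \<bullet> i} \<and> card (sides L c i) = 2"
proof -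
  let ?X = "\<lambda>i. level_of i ` sides L c i"
  have comp: "c \<in> components (- \<Union>L)" and bd: "bounded c"
    and fr: "frontier c \<subseteq> \<Union>(bounding_segs L c)" and four: "card (bounding_segs L c) = 4"
    using rc by (auto simp: rectangular_cell_def cells_def)
  have fin_sides: "finite (sides L c i)" for i
    using fin by (auto simp: sides_def bounding_segs_def)
  have sum_sides: "(\<Sum>i\<in>Basis. card (sides L c i)) \<le> 2 * DIM(point)"
    using card_bounding_segs_eq_sum_sides[OF fin ax] four by simp
  moreover have "(\<Sum>i\<in>Basis. card (?X i)) \<le> (\<Sum>i\<in>Basis. card (sides L c i))"
    by (intro sum_mono card_image_le fin_sides)
  moreover have "open c" "connected c" "c \<noteq> {}"
    using comp closed_Union_axis_segments[OF fin ax] in_components_nonempty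
    by (auto intro: open_components in_components_connected)
  ultimately obtain a b where box: "c = box a b"
    and ab: "\<And>i. i \<in> Basis \<Longrightarrow> a \<bullet> i < b \<bullet> i \<and> ?X i = {a \<bullet> i, b \<bullet> i}"
    using bounded_grid_component_eq_box[OF _ _ bd _ finite_imageI[OF fin_sides]
        frontier_subset_levels_of_sides[OF ax fr]]
    by (metis (no_types, lifting) order.trans)
  have two: "2 \<le> card (sides L c i)" if "i \<in> Basis" for i
    using card_image_le[OF fin_sides, of "level_of i" i] ab[OF that] by simp
  have "card (sides L c i) = 2" if "i \<in> Basis" for i
    using eq_lower_bound_if_sum_le[OF finite_Basis two _ that] sum_sides by (simp add: mult.commute)
  then show ?thesis
    using that box ab by blast
qed

lemma box_Int_box_nonempty:
  fixes a b a' b' :: "'a::euclidean_space"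
  assumes "\<And>i. i \<in> Basis \<Longrightarrow> a \<bullet> i < b \<bullet> i \<and> a' \<bullet> i < b' \<bullet> i \<and> (a \<bullet> i = a' \<bullet> i \<or> b \<bullet> i = b' \<bullet> i)"
  shows "box a b \<inter> box a' b' \<noteq> {}"
proof -
  define lo where "lo i = max (a \<bullet> i) (a' \<bullet> i)" for i
  define hi where "hi i = min (b \<bullet> i) (b' \<bullet> i)" for i
  define x :: 'a where "x = (\<Sum>i\<in>Basis. ((lo i + hi i) / 2) *\<^sub>R i)"
  have "a \<bullet> i < x \<bullet> i \<and> x \<bullet> i < b \<bullet> i \<and> a' \<bullet> i < x \<bullet> i \<and> x \<bullet> i < b' \<bullet> i"
    if i: "i \<in> Basis" for i
  proof -
    have "lo i < hi i"
      using assms[OF i] by (auto simp: lo_def hi_def)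
    moreover have "x \<bullet> i = (lo i + hi i) / 2"
      using i by (simp add: x_def inner_sum_left_Basis)
    moreover have "a \<bullet> i \<le> lo i" "a' \<bullet> i \<le> lo i" "hi i \<le> b \<bullet> i" "hi i \<le> b' \<bullet> i"
      by (simp_all add: lo_def hi_def)
    ultimately show ?thesis
      by auto
  qed
  then have "x \<in> box a b \<inter> box a' b'"
    by (simp add: mem_box)
  then show ?thesis
    by blast
qed

lemma components_eq_if_boxes_share_sides:
  assumes "box a b \<in> components S" "box a' b' \<in> components S"
    and "i \<in> Basis" "j \<in> Basis" "i \<noteq> j"
    and "a \<bullet> i = a' \<bullet> i" "b \<bullet> i = b' \<bullet> i" "a \<bullet> i < b \<bullet> i"
    and "a \<bullet> j < b \<bullet> j" "a' \<bullet> j < b' \<bullet> j" "a \<bullet> j = a' \<bullet> j \<or> b \<bullet> j = b' \<bullet> j"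
  shows "box a b = (box a' b' :: point set)"
proof -
  have "a \<bullet> k < b \<bullet> k \<and> a' \<bullet> k < b' \<bullet> k \<and> (a \<bullet> k = a' \<bullet> k \<or> b \<bullet> k = b' \<bullet> k)"
    if "k \<in> Basis" for k
  proof -
    have "k = i \<or> k = j"
      using that Basis_point_eq[OF assms(3-5)] by blast
    then show ?thesis
      using assms(6-) by (elim disjE) simp_all
  qed
  then have "box a b \<inter> box a' b' \<noteq> {}"
    by (rule box_Int_box_nonempty)
  then show ?thesis
    using components_eq[OF assms(1,2)] by blast
qed

lemma card_2_eq_pair:
  assumes "card A = 2" "x \<in> A" "y \<in> A" "x \<noteq> y"
  shows "A = {x, y}"
  using assms by (auto simp: card_2_iff)

lemma rectangular_cells_with_two_parallel_sides:
  assumes fin: "finite L" and ax: "\<forall>s\<in>L. axis_segment s"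
    and cells: "\<And>c. c \<in> {c1, c2, c3} \<Longrightarrow> rectangular_cell L c"
    and segs: "\<And>c. c \<in> {c1, c2, c3} \<Longrightarrow> l \<in> bounding_segs L c \<and> l' \<in> bounding_segs L c \<and> m \<in> bounding_segs L c"
    and "l \<noteq> l'" and ij: "i \<in> Basis" "j \<in> Basis" "i \<noteq> j"
    and levels: "level_in i l" "level_in i l'" "level_in j m"
  shows "c1 = c2 \<or> c1 = c3 \<or> c2 = c3"
proof -
  let ?lo = "min (level_of i l) (level_of i l')" and ?hi = "max (level_of i l) (level_of i l')"
  have box: "\<exists>a b. c = box a b \<and> a \<bullet> i = ?lo \<and> b \<bullet> i = ?hi \<and> ?lo < ?hi \<and> a \<bullet> j < b \<bullet> j
      \<and> level_of j m \<in> {a \<bullet> j, b \<bullet> j}"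
    if c: "c \<in> {c1, c2, c3}" for c
  proof -
    obtain a b where box: "c = box a b"
      and ab: "\<And>k. k \<in> Basis \<Longrightarrow> a \<bullet> k < b \<bullet> k \<and> level_of k ` sides L c k = {a \<bullet> k, b \<bullet> k}
        \<and> card (sides L c k) = 2"
      using rectangular_cell_eq_box[OF fin ax cells[OF c]] by blast
    have "sides L c i = {l, l'}"
      by (rule card_2_eq_pair) (use ab[OF ij(1)] segs[OF c] levels \<open>l \<noteq> l'\<close> in \<open>auto simp: sides_def\<close>)
    then have "{a \<bullet> i, b \<bullet> i} = {level_of i l, level_of i l'}" "a \<bullet> i < b \<bullet> i"
      using ab[OF ij(1)] by simp_all
    then have "a \<bullet> i = ?lo \<and> b \<bullet> i = ?hi \<and> ?lo < ?hi"
      by (auto simp: doubleton_eq_iff)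
    moreover have "level_of j m \<in> {a \<bullet> j, b \<bullet> j}"
      using ab[OF ij(2)] segs[OF c] levels(3) by (auto simp: sides_def)
    ultimately show ?thesis
      using box ab[OF ij(2)] by blast
  qed
  obtain a1 b1 where b1: "c1 = box a1 b1" "a1 \<bullet> i = ?lo" "b1 \<bullet> i = ?hi" "a1 \<bullet> j < b1 \<bullet> j"
      "level_of j m \<in> {a1 \<bullet> j, b1 \<bullet> j}" and lo_hi: "?lo < ?hi"
    using box[of c1] by blast
  obtain a2 b2 where b2: "c2 = box a2 b2" "a2 \<bullet> i = ?lo" "b2 \<bullet> i = ?hi" "a2 \<bullet> j < b2 \<bullet> j"
      "level_of j m \<in> {a2 \<bullet> j, b2 \<bullet> j}"
    using box[of c2] by blast
  obtain a3 b3 where b3: "c3 = box a3 b3" "a3 \<bullet> i = ?lo" "b3 \<bullet> i = ?hi" "a3 \<bullet> j < b3 \<bullet> j"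
      "level_of j m \<in> {a3 \<bullet> j, b3 \<bullet> j}"
    using box[of c3] by blast
  have comps: "box a1 b1 \<in> components (- \<Union>L)" "box a2 b2 \<in> components (- \<Union>L)"
    "box a3 b3 \<in> components (- \<Union>L)"
    using cells b1(1) b2(1) b3(1) by (simp_all add: rectangular_cell_def cells_def)
  note meet = components_eq_if_boxes_share_sides[OF _ _ ij]
  consider "a1 \<bullet> j = a2 \<bullet> j \<or> b1 \<bullet> j = b2 \<bullet> j" | "a1 \<bullet> j = a3 \<bullet> j \<or> b1 \<bullet> j = b3 \<bullet> j"
    | "a2 \<bullet> j = a3 \<bullet> j \<or> b2 \<bullet> j = b3 \<bullet> j"
    using b1(5) b2(5) b3(5) by auto
  then show ?thesis
  proof cases
    case 1
    have "c1 = c2"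
      unfolding b1(1) b2(1) by (rule meet) (use comps b1 b2 lo_hi 1 in simp_all)
    then show ?thesis
      by blast
  next
    case 2
    have "c1 = c3"
      unfolding b1(1) b3(1) by (rule meet) (use comps b1 b3 lo_hi 2 in simp_all)
    then show ?thesis
      by blast
  next
    case 3
    have "c2 = c3"
      unfolding b2(1) b3(1) by (rule meet) (use comps b2 b3 lo_hi 3 in simp_all)
    then show ?thesis
      by blast
  qed
qed

lemma rectangular_cells_bounded_by_three_segments:
  assumes fin: "finite L" and ax: "\<forall>s\<in>L. axis_segment s"
    and cells: "\<And>c. c \<in> {c1, c2, c3} \<Longrightarrow> rectangular_cell L c \<and> {l, l', m} \<subseteq> bounding_segs L c"
    and distinct: "l \<noteq> l'" "l \<noteq> m" "l' \<noteq> m"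
  shows "c1 = c2 \<or> c1 = c3 \<or> c2 = c3"
proof -
  have rc1: "rectangular_cell L c1" and segs1: "{l, l', m} \<subseteq> bounding_segs L c1"
    using cells by auto
  then have "axis_segment l" "axis_segment l'" "axis_segment m"
    using ax by (auto simp: bounding_segs_def)
  then obtain i i' j where levels: "i \<in> Basis" "level_in i l" "i' \<in> Basis" "level_in i' l'"
      "j \<in> Basis" "level_in j m"
    by (metis axis_segment_level_in)
  have not_all_parallel: "\<not> (i' = i \<and> j = i)"
  proof
    assume "i' = i \<and> j = i"
    then have "{l, l', m} \<subseteq> sides L c1 i"
      using segs1 levels by (auto simp: sides_def)
    moreover have "card (sides L c1 i) = 2"
      using rectangular_cell_eq_box[OF fin ax rc1] levels(1) by metis
    ultimately have "card {l, l', m} \<le> 2"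
      by (metis card_mono card.infinite zero_neq_numeral)
    then show False
      using distinct by simp
  qed
  have other: "k = k'" if "k \<in> Basis" "k' \<in> Basis" "k \<noteq> i" "k' \<noteq> i" for k k'
    using that Basis_point_eq[OF levels(1) that(1)] by blast
  note parallel = rectangular_cells_with_two_parallel_sides[OF fin ax]
  consider "i' = i" "j \<noteq> i" | "j = i" "i' \<noteq> i" | "i' \<noteq> i" "j = i'"
    using not_all_parallel other levels(3,5) by blast
  then show ?thesis
  proof cases
    case 1
    show ?thesis
      by (rule parallel[of c1 c2 c3 l l' m i j]) (use cells distinct levels 1 in auto)
  next
    case 2
    show ?thesis
      by (rule parallel[of c1 c2 c3 l m l' i i']) (use cells distinct levels 2 in auto)
  next
    case 3
    show ?thesis
      by (rule parallel[of c1 c2 c3 l' m l i' i]) (use cells distinct levels 3 in auto)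
  qed
qed

lemma card_le_2_if_no_three_distinct:
  assumes "\<And>x y z. x \<in> A \<Longrightarrow> y \<in> A \<Longrightarrow> z \<in> A \<Longrightarrow> x = y \<or> x = z \<or> y = z"
  shows "finite A \<and> card A \<le> 2"
proof (rule ccontr)
  assume "\<not> (finite A \<and> card A \<le> 2)"
  then obtain T where "T \<subseteq> A" "card T = 3"
    by (metis infinite_arbitrarily_large not_less_eq_eq numeral_2_eq_2 numeral_3_eq_3
        obtain_subset_with_card_n)
  then obtain x y z where "x \<in> A" "y \<in> A" "z \<in> A" "x \<noteq> y" "x \<noteq> z" "y \<noteq> z"
    by (auto simp: card_3_iff)
  then show False
    using assms by blast
qed

lemma at_most_two_per_triple_cell_subsets:
  assumes "finite L" "\<forall>s\<in>L. axis_segment s"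
  shows "at_most_two_per_triple (cell_subsets L)"
  unfolding at_most_two_per_triple_def
proof (intro allI impI)
  fix l l' m :: "point set"
  assume "l \<noteq> l' \<and> l \<noteq> m \<and> l' \<noteq> m"
  then have distinct: "l \<noteq> l'" "l \<noteq> m" "l' \<noteq> m"
    by simp_all
  let ?cells = "{c. rectangular_cell L c \<and> {l, l', m} \<subseteq> bounding_segs L c}"
  have cells: "finite ?cells \<and> card ?cells \<le> 2"
  proof (rule card_le_2_if_no_three_distinct)
    fix x y z assume "x \<in> ?cells" "y \<in> ?cells" "z \<in> ?cells"
    then show "x = y \<or> x = z \<or> y = z"
      by (intro rectangular_cells_bounded_by_three_segments[OF assms _ distinct]) blast
  qed
  moreover have "{S \<in> cell_subsets L. {l, l', m} \<subseteq> S} = bounding_segs L ` ?cells"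
    unfolding cell_subsets_def by blast
  moreover have "card (bounding_segs L ` ?cells) \<le> card ?cells"
    using cells by (intro card_image_le) simp
  ultimately show "finite {S \<in> cell_subsets L. {l, l', m} \<subseteq> S} \<and>
      card {S \<in> cell_subsets L. {l, l', m} \<subseteq> S} \<le> 2"
    by simp
qed

theorem lemma3:
  fixes L :: "point set set" and L' :: "point set set" and k :: nat
  assumes "finite L"
    and "\<forall>s\<in>L. axis_segment s"
    and "L' \<subseteq> L"
    and "card L' \<le> k"
  shows "min_cover L (reduce_C1 (cell_subsets L) k) L' \<longleftrightarrow> min_cover L (cell_subsets L) L'"
  using min_cover_reduce_C1_iff[OF at_most_two_per_triple_cell_subsets[OF assms(1,2)] assms(1,3,4)] .

end
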